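(* Let $S,T\subseteq[r]$. If $S$ dominates $T$, then $T\subseteq S$.
   Context: For $\pi=a_1\cdots a_{r+1}\in S_{r+1}$, its descent set is $\{i\in[r]:a_i>a_{i+1}\}$, and $D(S)$ is the set of permutations in $S_{r+1}$ with descent set $S$. The inversion set is $I(\pi)=\{(a_i,a_j):i<j,\ a_i>a_j\}$; $\pi\le_w\pi'$ iff $I(\pi)\subseteq I(\pi')$ (weak Bruhat order). $S$ dominates $T$ if there is an injection $\phi:D(T)\to D(S)$ with $\pi\le_w\phi(\pi)$ for all $\pi\in D(T)$. *)

theory Defs
  imports Main
begin

text \<open>Permutations of [r+1] = {1..r+1} in one-line notation a_1 ... a_{r+1},
  represented as lists; the list index i-1 holds a_i.\<close>

definition perms :: "nat \<Rightarrow> nat list set" where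
  "perms n = {xs. distinct xs \<and> set xs = {1..n}}"

definition descent_set :: "nat list \<Rightarrow> nat set" where
  "descent_set xs = {i. 1 \<le> i \<and> i < length xs \<and> xs ! (i - 1) > xs ! i}"

definition Dset :: "nat \<Rightarrow> nat set \<Rightarrow> nat list set" where
  "Dset r S = {xs \<in> perms (r + 1). descent_set xs = S}"

definition inv_set :: "nat list \<Rightarrow> (nat \<times> nat) set" where
  "inv_set xs = {(xs ! i, xs ! j) | i j. i < j \<and> j < length xs \<and> xs ! i > xs ! j}"

definition weak_le :: "nat list \<Rightarrow> nat list \<Rightarrow> bool" where
  "weak_le p q \<longleftrightarrow> inv_set p \<subseteq> inv_set q"

definition dominates :: "nat \<Rightarrow> nat set \<Rightarrow> nat set \<Rightarrow> bool" where
  "dominates r S T \<longleftrightarrow>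
     (\<exists>\<phi>. \<phi> ` Dset r T \<subseteq> Dset r S \<and> inj_on \<phi> (Dset r T)
          \<and> (\<forall>\<pi>\<in>Dset r T. weak_le \<pi> (\<phi> \<pi>)))"

end

theory Submission
  imports Defs
begin

text \<open>Take \<open>\<pi> \<in> D(T)\<close> (in fact its weak-order maximum) such that for every \<open>i \<in> T\<close>,
  each entry in positions \<open>1..i\<close> exceeds each entry in positions \<open>i+1..r+1\<close>.
  Then every pair of values straddling position \<open>i\<close> is an inversion of \<open>\<pi>\<close>; any \<open>\<sigma> \<ge>\<^sub>w \<pi>\<close>
  inherits these inversions, which forces \<open>\<sigma>\<close> to carry the same \<open>i\<close> large values in its
  first \<open>i\<close> positions, so \<open>\<sigma>\<close> has a descent at \<open>i\<close>. Applied to \<open>\<sigma> = \<phi>(\<pi>) \<in> D(S)\<close>,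
  this gives \<open>T \<subseteq> S\<close>.\<close>

definition separated_at :: "nat list \<Rightarrow> nat \<Rightarrow> bool" where
  "separated_at xs i \<longleftrightarrow> (\<forall>p q. p < i \<longrightarrow> i \<le> q \<longrightarrow> q < length xs \<longrightarrow> xs ! q < xs ! p)"

lemma perms_length: "xs \<in> perms n \<Longrightarrow> length xs = n"
  unfolding perms_def using distinct_card by fastforce

lemma perms_intro:
  assumes "distinct xs" "length xs = n" "set xs \<subseteq> {1..n}"
  shows "xs \<in> perms n"
proof -
  have "card (set xs) = card {1..n}" using assms distinct_card by fastforce
  then have "set xs = {1..n}" using assms(3) by (simp add: card_subset_eq)
  then show ?thesis using assms unfolding perms_def by auto
qed

lemma inv_set_nth_iff:
  assumes "distinct xs" "p < length xs" "q < length xs"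
  shows "(xs ! p, xs ! q) \<in> inv_set xs \<longleftrightarrow> p < q \<and> xs ! q < xs ! p"
  using assms by (auto simp: inv_set_def nth_eq_iff_index_eq)

lemma descent_set_map_strict_mono:
  assumes "strict_mono g"
  shows "descent_set (map g xs) = descent_set xs"
  unfolding descent_set_def using strict_mono_less[OF assms] by auto

lemma descent_set_snoc:
  assumes "xs \<noteq> []"
  shows "descent_set (xs @ [z]) = descent_set xs \<union> (if z < last xs then {length xs} else {})"
proof (rule set_eqI)
  fix k
  have "last xs = xs ! (length xs - 1)" "1 \<le> length xs"
    using assms by (auto simp: last_conv_nth Suc_le_eq)
  then consider "k < length xs" | "k = length xs" | "k > length xs" by linarith
  then show "k \<in> descent_set (xs @ [z]) \<longleftrightarrow>
      k \<in> descent_set xs \<union> (if z < last xs then {length xs} else {})"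
    by cases (use \<open>last xs = _\<close> \<open>1 \<le> length xs\<close> in \<open>auto simp: descent_set_def nth_append\<close>)
qed

lemma separated_at_imp_descent:
  assumes "separated_at xs i" "1 \<le> i" "i < length xs"
  shows "i \<in> descent_set xs"
  using assms unfolding separated_at_def descent_set_def by simp

lemma nth_mem_iff_less_card:
  assumes dist: "distinct xs" and "A \<subseteq> set xs" and j: "j < length xs"
    and precede: "\<And>p q. p < length xs \<Longrightarrow> q < length xs \<Longrightarrow> xs ! p \<in> A \<Longrightarrow> xs ! q \<notin> A \<Longrightarrow> p < q"
  shows "xs ! j \<in> A \<longleftrightarrow> j < card A"
proof
  assume "xs ! j \<in> A"
  have "set xs - A \<subseteq> set (drop (Suc j) xs)"
  proof
    fix b assume "b \<in> set xs - A"
    then obtain q where "q < length xs" "xs ! q = b" "b \<notin> A" by (auto simp: in_set_conv_nth)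
    moreover from this have "j < q" using precede j \<open>xs ! j \<in> A\<close> by blast
    ultimately show "b \<in> set (drop (Suc j) xs)"
      by (auto simp: in_set_conv_nth intro!: exI[of _ "q - Suc j"])
  qed
  then have "card (set xs - A) \<le> length xs - Suc j"
    by (metis List.finite_set card_length card_mono length_drop order_trans)
  moreover have "card (set xs - A) = length xs - card A"
    using assms by (simp add: card_Diff_subset distinct_card finite_subset)
  ultimately show "j < card A" using j by linarith
next
  assume "j < card A"
  show "xs ! j \<in> A"
  proof (rule ccontr)
    assume "xs ! j \<notin> A"
    have "A \<subseteq> set (take j xs)"
    proof
      fix a assume "a \<in> A"
      then obtain p where "p < length xs" "xs ! p = a"
        using \<open>A \<subseteq> set xs\<close> by (metis in_set_conv_nth subsetD)
      moreover from this have "p < j" using precede j \<open>xs ! j \<notin> A\<close> \<open>a \<in> A\<close> by blast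
      ultimately show "a \<in> set (take j xs)" by (auto simp: in_set_conv_nth)
    qed
    then have "card A \<le> j"
      by (metis List.finite_set card_length card_mono length_take min.bounded_iff order_trans)
    with \<open>j < card A\<close> show False by simp
  qed
qed

lemma weak_le_preserves_separated_at:
  assumes \<pi>: "\<pi> \<in> perms n" and \<sigma>: "\<sigma> \<in> perms n" and "weak_le \<pi> \<sigma>"
    and sep: "separated_at \<pi> i" and "i \<le> n"
  shows "separated_at \<sigma> i"
proof -
  have len: "length \<pi> = n" "length \<sigma> = n" using \<pi> \<sigma> perms_length by auto
  have dist: "distinct \<pi>" "distinct \<sigma>" and "set \<sigma> = set \<pi>" using \<pi> \<sigma> unfolding perms_def by auto
  define A where "A = set (take i \<pi>)"
  have B: "set \<sigma> - A = set (drop i \<pi>)"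
  proof -
    have "set \<pi> = A \<union> set (drop i \<pi>)" "A \<inter> set (drop i \<pi>) = {}"
      using dist(1) unfolding A_def by (metis append_take_drop_id set_append distinct_append)+
    then show ?thesis using \<open>set \<sigma> = set \<pi>\<close> by blast
  qed
  have straddling_inv: "(a, b) \<in> inv_set \<sigma>" if "a \<in> A" "b \<in> set \<sigma> - A" for a b
  proof -
    obtain p where p: "p < i" "\<pi> ! p = a"
      using \<open>a \<in> A\<close> \<open>i \<le> n\<close> len unfolding A_def by (auto simp: in_set_conv_nth)
    obtain k where "k < length (drop i \<pi>)" "drop i \<pi> ! k = b"
      using \<open>b \<in> set \<sigma> - A\<close> unfolding B in_set_conv_nth by blast
    then have q: "i \<le> i + k" "i + k < n" "\<pi> ! (i + k) = b" using len \<open>i \<le> n\<close> by auto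
    have "\<pi> ! (i + k) < \<pi> ! p" using p(1) q(1,2) sep len unfolding separated_at_def by blast
    moreover have "p < i + k" "i + k < length \<pi>" using p(1) q(2) len by auto
    ultimately have "(\<pi> ! p, \<pi> ! (i + k)) \<in> inv_set \<pi>" unfolding inv_set_def by blast
    with \<open>weak_le \<pi> \<sigma>\<close> p(2) q(3) show ?thesis unfolding weak_le_def by blast
  qed
  have card_A: "card A = i" using dist(1) len \<open>i \<le> n\<close> unfolding A_def by (simp add: distinct_card)
  have prefix: "\<sigma> ! j \<in> A \<longleftrightarrow> j < i" if "j < n" for j
  proof -
    have "p < q" if "p < n" "q < n" "\<sigma> ! p \<in> A" "\<sigma> ! q \<notin> A" for p q
      using straddling_inv[of "\<sigma> ! p" "\<sigma> ! q"] that inv_set_nth_iff[OF dist(2)] len by auto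
    then show ?thesis
      using nth_mem_iff_less_card[OF dist(2), of A j] \<open>j < n\<close> card_A len \<open>set \<sigma> = set \<pi>\<close>
      unfolding A_def by (auto simp: set_take_subset)
  qed
  show ?thesis unfolding separated_at_def
  proof (intro allI impI)
    fix p q assume "p < i" "i \<le> q" "q < length \<sigma>"
    then have "\<sigma> ! p \<in> A" "\<sigma> ! q \<in> set \<sigma> - A" using prefix len \<open>i \<le> n\<close> by auto
    from straddling_inv[OF this] show "\<sigma> ! q < \<sigma> ! p"
      using inv_set_nth_iff[OF dist(2)] \<open>p < i\<close> \<open>i \<le> q\<close> \<open>q < length \<sigma>\<close> by auto
  qed
qed

definition shift_from :: "nat \<Rightarrow> nat \<Rightarrow> nat" where
  "shift_from v x = (if v \<le> x then Suc x else x)"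

lemma strict_mono_shift_from: "strict_mono (shift_from v)"
  by (auto simp: strict_mono_def shift_from_def)

definition append_shifted :: "nat \<Rightarrow> nat list \<Rightarrow> nat list" where
  "append_shifted v xs = map (shift_from v) xs @ [v]"

lemma append_shifted_perms:
  assumes "xs \<in> perms n" "1 \<le> v" "v \<le> Suc n"
  shows "append_shifted v xs \<in> perms (Suc n)"
proof (rule perms_intro)
  show "distinct (append_shifted v xs)"
    using assms(1) strict_mono_imp_inj_on[OF strict_mono_shift_from]
    unfolding append_shifted_def perms_def by (auto simp: distinct_map inj_on_subset shift_from_def)
  show "length (append_shifted v xs) = Suc n"
    using perms_length[OF assms(1)] unfolding append_shifted_def by simp
  show "set (append_shifted v xs) \<subseteq> {1..Suc n}"
    using assms unfolding append_shifted_def perms_def shift_from_def by auto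
qed

lemma descent_set_append_shifted:
  assumes "xs \<noteq> []"
  shows "descent_set (append_shifted v xs)
    = descent_set xs \<union> (if v \<le> last xs then {length xs} else {})"
  using assms unfolding append_shifted_def
  by (auto simp: descent_set_snoc descent_set_map_strict_mono strict_mono_shift_from last_map
      shift_from_def)

lemma separated_at_append_shifted:
  assumes sep: "separated_at xs i" and "i \<le> length xs" and below: "\<And>p. p < i \<Longrightarrow> v \<le> xs ! p"
  shows "separated_at (append_shifted v xs) i"
  unfolding separated_at_def
proof (intro allI impI)
  fix p q assume "p < i" "i \<le> q" "q < length (append_shifted v xs)"
  then have nth_p: "append_shifted v xs ! p = Suc (xs ! p)"
    using \<open>i \<le> length xs\<close> below by (simp add: append_shifted_def nth_append shift_from_def)
  show "append_shifted v xs ! q < append_shifted v xs ! p"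
  proof (cases "q < length xs")
    case True
    then have "shift_from v (xs ! q) < shift_from v (xs ! p)"
      using sep \<open>p < i\<close> \<open>i \<le> q\<close> strict_mono_less[OF strict_mono_shift_from]
      unfolding separated_at_def by blast
    then show ?thesis
      using True \<open>p < i\<close> \<open>i \<le> q\<close> unfolding append_shifted_def by (simp add: nth_append)
  next
    case False
    then have "append_shifted v xs ! q = v"
      using \<open>q < length (append_shifted v xs)\<close> by (simp add: append_shifted_def nth_append)
    then show ?thesis using nth_p below[OF \<open>p < i\<close>] by simp
  qed
qed

lemma Dset_has_separated_member:
  assumes "T \<subseteq> {1..r}"
  shows "\<exists>xs \<in> Dset r T. \<forall>i \<in> T. separated_at xs i"
  using assms
proof (induction r arbitrary: T)
  case 0
  then have "T = {}" by auto
  moreover have "[1] \<in> Dset 0 {}"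
    unfolding Dset_def perms_def descent_set_def by auto
  ultimately show ?case by blast
next
  case (Suc r)
  define T' where "T' = T - {Suc r}"
  have "T' \<subseteq> {1..r}" using Suc.prems unfolding T'_def by auto
  from Suc.IH[OF this] obtain xs where "xs \<in> Dset r T'" and sep: "\<forall>i \<in> T'. separated_at xs i"
    by blast
  then have xs: "xs \<in> perms (Suc r)" "descent_set xs = T'" unfolding Dset_def by auto
  have len: "length xs = Suc r" using xs(1) perms_length by blast
  have "xs \<noteq> []" using len by auto
  then have last: "last xs = xs ! r" "last xs \<in> {1..Suc r}"
    using last_in_set[of xs] xs(1) len unfolding perms_def by (auto simp: last_conv_nth)
  txt \<open>Appending the value \<open>1\<close> creates the descent at \<open>r + 1\<close>; appending \<open>last xs + 1\<close>
    avoids it while staying below every entry that precedes an earlier descent.\<close>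
  show ?case
  proof (cases "Suc r \<in> T")
    case True
    have "append_shifted 1 xs \<in> Dset (Suc r) T"
      using append_shifted_perms[OF xs(1)] descent_set_append_shifted[OF \<open>xs \<noteq> []\<close>, of 1]
        xs(2) len last True unfolding Dset_def T'_def by auto
    moreover have "separated_at (append_shifted 1 xs) i" if "i \<in> T" for i
    proof (rule separated_at_append_shifted)
      show "separated_at xs i"
        using sep that len unfolding T'_def separated_at_def by (cases "i = Suc r") auto
      show "i \<le> length xs" using that Suc.prems len by auto
      show "1 \<le> xs ! p" if "p < i" for p
        using that \<open>i \<le> length xs\<close> xs(1) unfolding perms_def by (auto dest: nth_mem)
    qed
    ultimately show ?thesis by blast
  next
    case False
    then have "T' = T" unfolding T'_def by auto
    have "append_shifted (Suc (last xs)) xs \<in> Dset (Suc r) T"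
      using append_shifted_perms[OF xs(1)]
        descent_set_append_shifted[OF \<open>xs \<noteq> []\<close>, of "Suc (last xs)"] xs(2) len last \<open>T' = T\<close> unfolding Dset_def by auto
    moreover have "separated_at (append_shifted (Suc (last xs)) xs) i" if "i \<in> T" for i
    proof (rule separated_at_append_shifted)
      show "separated_at xs i" using sep that \<open>T' = T\<close> by blast
      have "i \<le> r" using that \<open>T' = T\<close> \<open>T' \<subseteq> {1..r}\<close> by auto
      then show "i \<le> length xs" using len by simp
      show "Suc (last xs) \<le> xs ! p" if "p < i" for p
        using \<open>separated_at xs i\<close> that \<open>i \<le> r\<close> len last(1)
        unfolding separated_at_def by (simp add: Suc_le_eq)
    qed
    ultimately show ?thesis by blast
  qed
qed

theorem proposition5p4:
  fixes r :: nat and S T :: "nat set"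
  assumes "S \<subseteq> {1..r}" and "T \<subseteq> {1..r}"
    and "dominates r S T"
  shows "T \<subseteq> S"
proof
  fix i assume "i \<in> T"
  obtain \<phi> where \<phi>: "\<phi> ` Dset r T \<subseteq> Dset r S" "\<forall>\<pi> \<in> Dset r T. weak_le \<pi> (\<phi> \<pi>)"
    using assms(3) unfolding dominates_def by blast
  obtain \<pi> where \<pi>: "\<pi> \<in> Dset r T" and "separated_at \<pi> i"
    using Dset_has_separated_member[OF assms(2)] \<open>i \<in> T\<close> by blast
  have \<phi>\<pi>: "\<phi> \<pi> \<in> Dset r S" using \<phi>(1) \<pi> by blast
  have i: "1 \<le> i" "i < Suc r" using \<open>i \<in> T\<close> assms(2) by auto
  have "separated_at (\<phi> \<pi>) i"
    using weak_le_preserves_separated_at[of \<pi> "Suc r" "\<phi> \<pi>" i] \<pi> \<phi>\<pi> \<phi>(2)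
      \<open>separated_at \<pi> i\<close> i unfolding Dset_def by auto
  then have "i \<in> descent_set (\<phi> \<pi>)"
    using separated_at_imp_descent i \<phi>\<pi> perms_length unfolding Dset_def by auto
  then show "i \<in> S" using \<phi>\<pi> unfolding Dset_def by auto
qed

end
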